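(* Let $A_1,A_2\subset\mathcal{M}$ be sets of copies of $G_0$, let $\hat A_2:=\bigcup_{\Gamma\in A_2}\mathcal{M}_\Gamma$, and let $F$ be a non-negative functional of $\{B_\Gamma\}_{\Gamma\in A_2}$, so that $F$ is independent of $\{B_\Gamma\}_{\Gamma\in\mathcal{M}\setminus\hat A_2}$. Then for all $t\ge0$, $$\mathbb{E}\Big[F\,e^{\frac t\sigma\sum_{\Gamma\in\mathcal{M}\setminus A_1}B_\Gamma^c}\Big]\le\mathbb{E}[F]\,e^{\frac t\sigma|A_1\cup\hat A_2|}\,\mathbb{E}[e^{tW}],$$ and in particular $$\mathbb{E}\Big[e^{\frac t\sigma\sum_{\Gamma\in\mathcal{M}\setminus A_1}B_\Gamma^c}\Big]\le e^{\frac t\sigma|A_1|}\,\mathbb{E}[e^{tW}].$$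
   Context: $G_0$ is a graph with at least one edge and no isolated vertices. $E$ is the set of edges of $K_n$; $(B_k)_{k\in E}$ are independent Bernoulli($p$), $p\in(0,1)$; $B_A=\prod_{k\in A}B_k$, $Z^c=Z-\mathbb{E}Z$. $\mathcal{M}$ is the set of all $\Gamma\subset E$ whose spanned graph is isomorphic to $G_0$; for $\Gamma\in\mathcal{M}$, $\mathcal{M}_\Gamma=\{\Gamma'\in\mathcal{M}:\Gamma'\cap\Gamma\neq\emptyset\}$. $\sigma^2=\operatorname{Var}(\sum_{\Gamma\in\mathcal{M}}B_\Gamma)$ and $W=\frac1\sigma\sum_{\Gamma\in\mathcal{M}}B_\Gamma^c$. *)

theory Defs
  imports "HOL-Probability.Probability"
begin

definition edges_K :: "nat \<Rightarrow> nat set set" where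
  "edges_K n = {e. \<exists>i<n. \<exists>j<n. i \<noteq> j \<and> e = {i, j}}"

text \<open>G_0 (no isolated vertices) is represented by its edge set E0; its vertex set is the union
  of its edges. Gamma is a copy of G_0 if the graph spanned by Gamma is isomorphic to G_0.\<close>
definition is_copy :: "'v set set \<Rightarrow> nat set set \<Rightarrow> bool" where
  "is_copy E0 \<Gamma> = (\<exists>f. bij_betw f (\<Union>E0) (\<Union>\<Gamma>) \<and> (\<lambda>e. f ` e) ` E0 = \<Gamma>)"

definition copies :: "nat \<Rightarrow> 'v set set \<Rightarrow> nat set set set" where
  "copies n E0 = {\<Gamma>. \<Gamma> \<subseteq> edges_K n \<and> is_copy E0 \<Gamma>}"

definition nbhd :: "nat \<Rightarrow> 'v set set \<Rightarrow> nat set set \<Rightarrow> nat set set set" where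
  "nbhd n E0 \<Gamma> = {\<Gamma>' \<in> copies n E0. \<Gamma>' \<inter> \<Gamma> \<noteq> {}}"

definition edge_space :: "nat \<Rightarrow> real \<Rightarrow> (nat set \<Rightarrow> bool) pmf" where
  "edge_space n p = Pi_pmf (edges_K n) False (\<lambda>_. bernoulli_pmf p)"

definition BG :: "nat set set \<Rightarrow> (nat set \<Rightarrow> bool) \<Rightarrow> real" where
  "BG \<Gamma> \<omega> = (\<Prod>k\<in>\<Gamma>. of_bool (\<omega> k))"

definition Ex :: "nat \<Rightarrow> real \<Rightarrow> ((nat set \<Rightarrow> bool) \<Rightarrow> real) \<Rightarrow> real" where
  "Ex n p f = measure_pmf.expectation (edge_space n p) f"

definition Bc :: "nat \<Rightarrow> real \<Rightarrow> nat set set \<Rightarrow> (nat set \<Rightarrow> bool) \<Rightarrow> real" where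
  "Bc n p \<Gamma> \<omega> = BG \<Gamma> \<omega> - Ex n p (BG \<Gamma>)"

definition sigma :: "nat \<Rightarrow> real \<Rightarrow> 'v set set \<Rightarrow> real" where
  "sigma n p E0 = sqrt (measure_pmf.variance (edge_space n p) (\<lambda>\<omega>. \<Sum>\<Gamma>\<in>copies n E0. BG \<Gamma> \<omega>))"

definition W :: "nat \<Rightarrow> real \<Rightarrow> 'v set set \<Rightarrow> (nat set \<Rightarrow> bool) \<Rightarrow> real" where
  "W n p E0 \<omega> = (1 / sigma n p E0) * (\<Sum>\<Gamma>\<in>copies n E0. Bc n p \<Gamma> \<omega>)"

end

theory Submission
  imports Defs
begin

text \<open>Let \<open>C\<close> consist of \<open>A1\<close> and all copies meeting a copy in \<open>A2\<close>, and let \<open>Y\<close> be the sum of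
  the centred variables over the copies outside \<open>C\<close>. These copies share no edge with any copy in
  \<open>A2\<close>, so \<open>Y\<close> is a function of the edges outside \<open>\<Union>A2\<close> and hence independent of \<open>F\<close>.
  Since \<open>-E B\<^sub>\<Gamma> \<le> B\<^sub>\<Gamma> - E B\<^sub>\<Gamma> \<le> 1 - E B\<^sub>\<Gamma>\<close>, the centred sum over \<open>\<M> - A1\<close> exceeds \<open>Y\<close> by at
  most the sum of \<open>1 - E B\<^sub>\<Gamma>\<close> over \<open>C - A1\<close>, and \<open>Y\<close> exceeds \<open>\<sigma> W\<close> by at most the sum of
  \<open>E B\<^sub>\<Gamma>\<close> over \<open>C\<close>; together these constants are at most \<open>|C|\<close>. The second inequality is the
  case \<open>F = 1\<close>, \<open>A2 = {}\<close>.\<close>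

lemma finite_set_pmf_Pi_pmf:
  assumes "finite A" "\<And>x. x \<in> A \<Longrightarrow> finite (set_pmf (p x))"
  shows "finite (set_pmf (Pi_pmf A dflt p))"
  using assms by (auto simp: set_Pi_pmf)

lemma expectation_pair_pmf_mult:
  fixes f :: "'a \<Rightarrow> real" and g :: "'b \<Rightarrow> real"
  assumes "finite (set_pmf P)" "finite (set_pmf Q)"
  shows "measure_pmf.expectation (pair_pmf P Q) (\<lambda>x. f (fst x) * g (snd x))
     = measure_pmf.expectation P f * measure_pmf.expectation Q g"
proof -
  have "measure_pmf.expectation (pair_pmf P Q) (\<lambda>x. f (fst x) * g (snd x))
     = (\<Sum>(a,b)\<in>set_pmf P \<times> set_pmf Q. (f a * pmf P a) * (g b * pmf Q b))"
    using assms by (subst integral_measure_pmf_real[of "set_pmf P \<times> set_pmf Q"])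
      (auto intro!: sum.cong simp: pmf_pair mult_ac)
  also have "\<dots> = (\<Sum>a\<in>set_pmf P. f a * pmf P a) * (\<Sum>b\<in>set_pmf Q. g b * pmf Q b)"
    by (simp add: sum.cartesian_product[symmetric] sum_product)
  also have "\<dots> = measure_pmf.expectation P f * measure_pmf.expectation Q g"
    using assms by (simp add: integral_measure_pmf_real[of "set_pmf P"] integral_measure_pmf_real[of "set_pmf Q"])
  finally show ?thesis .
qed

lemma expectation_Pi_pmf_mult_indep:
  fixes f g :: "('a \<Rightarrow> 'b) \<Rightarrow> real"
  assumes "finite A" "finite B" "A \<inter> B = {}"
    and "\<And>x. x \<in> A \<union> B \<Longrightarrow> finite (set_pmf (p x))"
    and f_local: "\<And>\<omega> \<omega>'. \<forall>x\<in>A. \<omega> x = \<omega>' x \<Longrightarrow> f \<omega> = f \<omega>'"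
    and g_local: "\<And>\<omega> \<omega>'. \<forall>x\<in>B. \<omega> x = \<omega>' x \<Longrightarrow> g \<omega> = g \<omega>'"
  shows "measure_pmf.expectation (Pi_pmf (A \<union> B) dflt p) (\<lambda>\<omega>. f \<omega> * g \<omega>)
     = measure_pmf.expectation (Pi_pmf (A \<union> B) dflt p) f
       * measure_pmf.expectation (Pi_pmf (A \<union> B) dflt p) g"
proof -
  define merge where "merge = (\<lambda>(u :: 'a \<Rightarrow> 'b, v) x. if x \<in> A then u x else v x)"
  have Pi_union: "Pi_pmf (A \<union> B) dflt p = map_pmf merge (pair_pmf (Pi_pmf A dflt p) (Pi_pmf B dflt p))"
    unfolding merge_def using assms(1-3) by (rule Pi_pmf_union)
  have "f (merge uv) = f (fst uv)" for uv
    by (rule f_local) (auto simp: merge_def split: prod.splits)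
  moreover have "g (merge uv) = g (snd uv)" for uv
    by (rule g_local) (use assms(3) in \<open>auto simp: merge_def split: prod.splits\<close>)
  ultimately show ?thesis
    unfolding Pi_union integral_map_pmf
    using assms(1,2,4) by (simp add: expectation_pair_pmf_mult finite_set_pmf_Pi_pmf)
qed

lemma sum_centred_diff_le:
  fixes b m :: "'a \<Rightarrow> real"
  assumes "finite S" "A \<subseteq> C" "C \<subseteq> S" "\<And>\<gamma>. b \<gamma> \<le> 1"
  shows "(\<Sum>\<gamma>\<in>S - A. b \<gamma> - m \<gamma>) \<le> (\<Sum>\<gamma>\<in>S - C. b \<gamma> - m \<gamma>) + (\<Sum>\<gamma>\<in>C - A. 1 - m \<gamma>)"
proof -
  have "S - A = (S - C) \<union> (C - A)" "(S - C) \<inter> (C - A) = {}"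
    using assms(2,3) by auto
  moreover have "finite (S - C)" "finite (C - A)"
    using assms(1,3) finite_subset by auto
  ultimately have "(\<Sum>\<gamma>\<in>S - A. b \<gamma> - m \<gamma>) = (\<Sum>\<gamma>\<in>S - C. b \<gamma> - m \<gamma>) + (\<Sum>\<gamma>\<in>C - A. b \<gamma> - m \<gamma>)"
    by (simp add: sum.union_disjoint)
  also have "(\<Sum>\<gamma>\<in>C - A. b \<gamma> - m \<gamma>) \<le> (\<Sum>\<gamma>\<in>C - A. 1 - m \<gamma>)"
    using assms(4) by (intro sum_mono) simp
  finally show ?thesis by simp
qed

lemma sum_centred_diff_ge:
  fixes b m :: "'a \<Rightarrow> real"
  assumes "finite S" "C \<subseteq> S" "\<And>\<gamma>. 0 \<le> b \<gamma>"
  shows "(\<Sum>\<gamma>\<in>S - C. b \<gamma> - m \<gamma>) \<le> (\<Sum>\<gamma>\<in>S. b \<gamma> - m \<gamma>) + (\<Sum>\<gamma>\<in>C. m \<gamma>)"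
proof -
  have "(\<Sum>\<gamma>\<in>S. b \<gamma> - m \<gamma>) = (\<Sum>\<gamma>\<in>S - C. b \<gamma> - m \<gamma>) + (\<Sum>\<gamma>\<in>C. b \<gamma> - m \<gamma>)"
    using assms(1,2) by (metis sum.subset_diff)
  moreover have "(\<Sum>\<gamma>\<in>C. b \<gamma>) \<ge> 0"
    using assms(3) by (simp add: sum_nonneg)
  ultimately show ?thesis by (simp add: sum_subtractf)
qed

lemma sum_one_minus_plus_sum_le_card:
  fixes m :: "'a \<Rightarrow> real"
  assumes "finite C" "\<And>\<gamma>. m \<gamma> \<le> 1"
  shows "(\<Sum>\<gamma>\<in>C - A. 1 - m \<gamma>) + (\<Sum>\<gamma>\<in>C. m \<gamma>) \<le> real (card C)"
proof -
  have "(\<Sum>\<gamma>\<in>C. m \<gamma>) = (\<Sum>\<gamma>\<in>C - A. m \<gamma>) + (\<Sum>\<gamma>\<in>C \<inter> A. m \<gamma>)"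
    using assms(1) by (metis sum.Int_Diff add.commute)
  moreover have "(\<Sum>\<gamma>\<in>C \<inter> A. m \<gamma>) \<le> real (card (C \<inter> A))"
    using sum_mono[of "C \<inter> A" m "\<lambda>_. 1"] assms(2) by simp
  moreover have "card C = card (C - A) + card (C \<inter> A)"
    using assms(1) by (metis card_Int_Diff add.commute)
  ultimately show ?thesis by (simp add: sum_subtractf)
qed

lemma finite_edges_K: "finite (edges_K n)"
proof (rule finite_subset)
  show "edges_K n \<subseteq> (\<lambda>(i, j). {i, j}) ` ({..<n} \<times> {..<n})"
    by (auto simp: edges_K_def)
qed auto

lemma finite_copies: "finite (copies n E0)"
  by (rule finite_subset[of _ "Pow (edges_K n)"]) (auto simp: copies_def finite_edges_K)

lemma finite_set_pmf_edge_space: "finite (set_pmf (edge_space n p))"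
  unfolding edge_space_def by (simp add: finite_set_pmf_Pi_pmf finite_edges_K)

lemma integrable_edge_space: "integrable (measure_pmf (edge_space n p)) (f :: _ \<Rightarrow> real)"
  by (rule integrable_measure_pmf_finite[OF finite_set_pmf_edge_space])

lemma Ex_mono: "(\<And>\<omega>. f \<omega> \<le> g \<omega>) \<Longrightarrow> Ex n p f \<le> Ex n p g"
  unfolding Ex_def by (rule integral_mono[OF integrable_edge_space integrable_edge_space])

lemma Ex_nonneg: "(\<And>\<omega>. 0 \<le> f \<omega>) \<Longrightarrow> 0 \<le> Ex n p f"
  unfolding Ex_def by (rule integral_nonneg_AE) simp

lemma Ex_mult_const: "Ex n p (\<lambda>\<omega>. f \<omega> * c) = Ex n p f * c"
  unfolding Ex_def by simp

lemma Ex_const: "Ex n p (\<lambda>_. c) = c"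
  unfolding Ex_def by simp

lemma Ex_mult_indep:
  assumes "D \<subseteq> edges_K n"
    and "\<And>\<omega> \<omega>'. \<forall>k\<in>D. \<omega> k = \<omega>' k \<Longrightarrow> f \<omega> = f \<omega>'"
    and "\<And>\<omega> \<omega>'. \<forall>k\<in>edges_K n - D. \<omega> k = \<omega>' k \<Longrightarrow> g \<omega> = g \<omega>'"
  shows "Ex n p (\<lambda>\<omega>. f \<omega> * g \<omega>) = Ex n p f * Ex n p g"
proof -
  have "edges_K n = D \<union> (edges_K n - D)"
    using assms(1) by auto
  then have split: "edge_space n p = Pi_pmf (D \<union> (edges_K n - D)) False (\<lambda>_. bernoulli_pmf p)"
    unfolding edge_space_def by (rule arg_cong)
  show ?thesis
    unfolding Ex_def split
    by (rule expectation_Pi_pmf_mult_indep)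
      (use assms finite_subset[OF assms(1)] finite_edges_K in auto)
qed

lemma BG_nonneg: "0 \<le> BG \<Gamma> \<omega>"
  by (simp add: BG_def prod_nonneg)

lemma BG_le_1: "BG \<Gamma> \<omega> \<le> 1"
  by (simp add: BG_def prod_le_1)

lemma Ex_BG_le_1: "Ex n p (BG \<Gamma>) \<le> 1"
  using Ex_mono[of "BG \<Gamma>" "\<lambda>_. 1"] by (simp add: BG_le_1 Ex_const)

lemma BG_cong: "\<forall>k\<in>\<Gamma>. \<omega> k = \<omega>' k \<Longrightarrow> BG \<Gamma> \<omega> = BG \<Gamma> \<omega>'"
  unfolding BG_def by (intro prod.cong) auto

lemma sum_Bc_cong_outside_nbhd:
  assumes "C \<subseteq> copies n E0" "(\<Union>\<Gamma>\<in>A. nbhd n E0 \<Gamma>) \<subseteq> B"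
    and "\<forall>k\<in>edges_K n - \<Union>A. \<omega> k = \<omega>' k"
  shows "(\<Sum>\<Gamma>\<in>C - B. Bc n p \<Gamma> \<omega>) = (\<Sum>\<Gamma>\<in>C - B. Bc n p \<Gamma> \<omega>')"
proof (rule sum.cong)
  fix \<Gamma> assume \<Gamma>: "\<Gamma> \<in> C - B"
  then have "\<Gamma> \<in> copies n E0" "\<forall>\<Gamma>'\<in>A. \<Gamma> \<notin> nbhd n E0 \<Gamma>'"
    using assms(1,2) by auto
  then have "\<Gamma> \<subseteq> edges_K n" "\<Gamma> \<inter> \<Union>A = {}"
    by (auto simp: copies_def nbhd_def)
  then have "BG \<Gamma> \<omega> = BG \<Gamma> \<omega>'"
    using assms(3) by (intro BG_cong) blast
  then show "Bc n p \<Gamma> \<omega> = Bc n p \<Gamma> \<omega>'"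
    by (simp add: Bc_def)
qed simp

lemma Ex_mult_indep_outside_nbhd:
  fixes \<phi> :: "(nat set set \<Rightarrow> real) \<Rightarrow> real" and h :: "real \<Rightarrow> real"
  assumes "A \<subseteq> copies n E0" "(\<Union>\<Gamma>\<in>A. nbhd n E0 \<Gamma>) \<subseteq> C"
  shows "Ex n p (\<lambda>\<omega>. \<phi> (\<lambda>\<Gamma>\<in>A. BG \<Gamma> \<omega>) * h (\<Sum>\<Gamma>\<in>copies n E0 - C. Bc n p \<Gamma> \<omega>))
       = Ex n p (\<lambda>\<omega>. \<phi> (\<lambda>\<Gamma>\<in>A. BG \<Gamma> \<omega>)) * Ex n p (\<lambda>\<omega>. h (\<Sum>\<Gamma>\<in>copies n E0 - C. Bc n p \<Gamma> \<omega>))"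
proof (rule Ex_mult_indep)
  show "\<Union>A \<subseteq> edges_K n"
    using assms(1) by (auto simp: copies_def)
  show "\<phi> (\<lambda>\<Gamma>\<in>A. BG \<Gamma> \<omega>) = \<phi> (\<lambda>\<Gamma>\<in>A. BG \<Gamma> \<omega>')" if "\<forall>k\<in>\<Union>A. \<omega> k = \<omega>' k" for \<omega> \<omega>'
    using that by (metis UnionI BG_cong restrict_ext)
  show "h (\<Sum>\<Gamma>\<in>copies n E0 - C. Bc n p \<Gamma> \<omega>) = h (\<Sum>\<Gamma>\<in>copies n E0 - C. Bc n p \<Gamma> \<omega>')"
    if "\<forall>k\<in>edges_K n - \<Union>A. \<omega> k = \<omega>' k" for \<omega> \<omega>'
    using assms(2) that by (subst sum_Bc_cong_outside_nbhd[where \<omega>' = \<omega>']) auto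
qed

lemma sum_Bc_split_bounds:
  assumes "A \<subseteq> C" "C \<subseteq> copies n E0"
  obtains K1 K2 where
    "\<And>\<omega>. (\<Sum>\<Gamma>\<in>copies n E0 - A. Bc n p \<Gamma> \<omega>) \<le> (\<Sum>\<Gamma>\<in>copies n E0 - C. Bc n p \<Gamma> \<omega>) + K1"
    "\<And>\<omega>. (\<Sum>\<Gamma>\<in>copies n E0 - C. Bc n p \<Gamma> \<omega>) \<le> (\<Sum>\<Gamma>\<in>copies n E0. Bc n p \<Gamma> \<omega>) + K2"
    "K1 + K2 \<le> real (card C)"
proof
  define m where "m = (\<lambda>\<Gamma>. Ex n p (BG \<Gamma>))"
  have Bc_eq: "Bc n p \<Gamma> \<omega> = BG \<Gamma> \<omega> - m \<Gamma>" for \<Gamma> \<omega>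
    by (simp add: Bc_def m_def)
  show "(\<Sum>\<Gamma>\<in>copies n E0 - A. Bc n p \<Gamma> \<omega>)
      \<le> (\<Sum>\<Gamma>\<in>copies n E0 - C. Bc n p \<Gamma> \<omega>) + (\<Sum>\<Gamma>\<in>C - A. 1 - m \<Gamma>)" for \<omega>
    unfolding Bc_eq using finite_copies assms by (rule sum_centred_diff_le) (rule BG_le_1)
  show "(\<Sum>\<Gamma>\<in>copies n E0 - C. Bc n p \<Gamma> \<omega>) \<le> (\<Sum>\<Gamma>\<in>copies n E0. Bc n p \<Gamma> \<omega>) + (\<Sum>\<Gamma>\<in>C. m \<Gamma>)" for \<omega>
    unfolding Bc_eq using finite_copies assms(2) by (rule sum_centred_diff_ge) (rule BG_nonneg)
  show "(\<Sum>\<Gamma>\<in>C - A. 1 - m \<Gamma>) + (\<Sum>\<Gamma>\<in>C. m \<Gamma>) \<le> real (card C)"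
    unfolding m_def using finite_subset[OF assms(2) finite_copies]
    by (rule sum_one_minus_plus_sum_le_card) (rule Ex_BG_le_1)
qed

lemma Ex_mult_exp_le_shift:
  assumes "\<And>\<omega>. 0 \<le> g \<omega>" "\<And>\<omega>. u \<omega> \<le> v \<omega> + c" "0 \<le> a"
  shows "Ex n p (\<lambda>\<omega>. g \<omega> * exp (a * u \<omega>)) \<le> Ex n p (\<lambda>\<omega>. g \<omega> * exp (a * v \<omega>)) * exp (a * c)"
  unfolding Ex_mult_const[symmetric]
proof (rule Ex_mono)
  fix \<omega>
  have "a * u \<omega> \<le> a * v \<omega> + a * c"
    using mult_left_mono[OF assms(2) assms(3)] by (simp add: distrib_left)
  then show "g \<omega> * exp (a * u \<omega>) \<le> g \<omega> * exp (a * v \<omega>) * exp (a * c)"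
    using assms(1) by (simp add: mult.assoc mult_left_mono flip: exp_add)
qed

lemma Ex_mult_exp_sum_Bc_le:
  fixes \<phi> :: "(nat set set \<Rightarrow> real) \<Rightarrow> real"
  assumes "A1 \<subseteq> copies n E0" "A2 \<subseteq> copies n E0" "\<And>x. 0 \<le> \<phi> x" "0 \<le> t"
  shows "Ex n p (\<lambda>\<omega>. \<phi> (\<lambda>\<Gamma>\<in>A2. BG \<Gamma> \<omega>) *
            exp (t / sigma n p E0 * (\<Sum>\<Gamma>\<in>copies n E0 - A1. Bc n p \<Gamma> \<omega>)))
         \<le> Ex n p (\<lambda>\<omega>. \<phi> (\<lambda>\<Gamma>\<in>A2. BG \<Gamma> \<omega>))
           * exp (t / sigma n p E0 * real (card (A1 \<union> (\<Union>\<Gamma>\<in>A2. nbhd n E0 \<Gamma>))))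
           * Ex n p (\<lambda>\<omega>. exp (t * W n p E0 \<omega>))"
proof -
  define C where "C = A1 \<union> (\<Union>\<Gamma>\<in>A2. nbhd n E0 \<Gamma>)"
  define a where "a = t / sigma n p E0"
  define F where "F = (\<lambda>\<omega>. \<phi> (\<lambda>\<Gamma>\<in>A2. BG \<Gamma> \<omega>))"
  define Y where "Y = (\<lambda>\<omega>. \<Sum>\<Gamma>\<in>copies n E0 - C. Bc n p \<Gamma> \<omega>)"
  have a_nonneg: "0 \<le> a"
    unfolding a_def sigma_def using assms(4) by simp
  have F_nonneg: "0 \<le> F \<omega>" for \<omega>
    unfolding F_def using assms(3) by simp
  have C_bounds: "A1 \<subseteq> C" "C \<subseteq> copies n E0"
    using assms(1) by (auto simp: C_def nbhd_def)
  obtain K1 K2 where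
    upper: "\<And>\<omega>. (\<Sum>\<Gamma>\<in>copies n E0 - A1. Bc n p \<Gamma> \<omega>) \<le> Y \<omega> + K1" and
    lower: "\<And>\<omega>. Y \<omega> \<le> (\<Sum>\<Gamma>\<in>copies n E0. Bc n p \<Gamma> \<omega>) + K2" and
    K1_K2: "K1 + K2 \<le> real (card C)"
    using sum_Bc_split_bounds[OF C_bounds, of p] unfolding Y_def by blast
  have indep: "Ex n p (\<lambda>\<omega>. F \<omega> * exp (a * Y \<omega>)) = Ex n p F * Ex n p (\<lambda>\<omega>. exp (a * Y \<omega>))"
    unfolding F_def Y_def C_def using assms(2) by (rule Ex_mult_indep_outside_nbhd) auto
  have W_moment: "Ex n p (\<lambda>\<omega>. exp (a * Y \<omega>))
      \<le> Ex n p (\<lambda>\<omega>. exp (t * W n p E0 \<omega>)) * exp (a * K2)"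
    using Ex_mult_exp_le_shift[of "\<lambda>_. 1", OF _ lower a_nonneg]
    by (simp add: W_def a_def)
  have "Ex n p (\<lambda>\<omega>. F \<omega> * exp (a * (\<Sum>\<Gamma>\<in>copies n E0 - A1. Bc n p \<Gamma> \<omega>)))
      \<le> Ex n p (\<lambda>\<omega>. F \<omega> * exp (a * Y \<omega>)) * exp (a * K1)"
    using F_nonneg upper a_nonneg by (rule Ex_mult_exp_le_shift)
  also have "\<dots> \<le> Ex n p F * (Ex n p (\<lambda>\<omega>. exp (t * W n p E0 \<omega>)) * exp (a * K2)) * exp (a * K1)"
    unfolding indep using W_moment F_nonneg by (intro mult_right_mono mult_left_mono Ex_nonneg) auto
  also have "\<dots> = Ex n p F * exp (a * (K1 + K2)) * Ex n p (\<lambda>\<omega>. exp (t * W n p E0 \<omega>))"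
    by (simp add: distrib_left exp_add mult_ac)
  also have "\<dots> \<le> Ex n p F * exp (a * real (card C)) * Ex n p (\<lambda>\<omega>. exp (t * W n p E0 \<omega>))"
    using mult_left_mono[OF K1_K2 a_nonneg] F_nonneg
    by (intro mult_right_mono mult_left_mono Ex_nonneg) auto
  finally show ?thesis
    unfolding F_def a_def C_def .
qed

theorem lemma5p6:
  fixes n :: nat and p t :: real and E0 :: "'v set set"
    and A1 A2 :: "nat set set set" and \<phi> :: "(nat set set \<Rightarrow> real) \<Rightarrow> real"
  assumes "0 < p" "p < 1"
    and "finite E0" "E0 \<noteq> {}" "\<forall>e\<in>E0. card e = 2"
    and "A1 \<subseteq> copies n E0" "A2 \<subseteq> copies n E0"
    and "\<forall>x. \<phi> x \<ge> 0"
    and "t \<ge> 0"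
  shows "Ex n p (\<lambda>\<omega>. \<phi> (\<lambda>\<Gamma>\<in>A2. BG \<Gamma> \<omega>) *
            exp (t / sigma n p E0 * (\<Sum>\<Gamma>\<in>copies n E0 - A1. Bc n p \<Gamma> \<omega>)))
         \<le> Ex n p (\<lambda>\<omega>. \<phi> (\<lambda>\<Gamma>\<in>A2. BG \<Gamma> \<omega>))
           * exp (t / sigma n p E0 * real (card (A1 \<union> (\<Union>\<Gamma>\<in>A2. nbhd n E0 \<Gamma>))))
           * Ex n p (\<lambda>\<omega>. exp (t * W n p E0 \<omega>))
       \<and> Ex n p (\<lambda>\<omega>. exp (t / sigma n p E0 * (\<Sum>\<Gamma>\<in>copies n E0 - A1. Bc n p \<Gamma> \<omega>)))
         \<le> exp (t / sigma n p E0 * real (card A1)) * Ex n p (\<lambda>\<omega>. exp (t * W n p E0 \<omega>))"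
  using Ex_mult_exp_sum_Bc_le[OF assms(6,7), of \<phi> t]
    Ex_mult_exp_sum_Bc_le[OF assms(6) empty_subsetI, of "\<lambda>_. 1" t] assms(8,9)
  by (simp add: Ex_const)

end
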